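(* Suppose $M\preceq N$ are small models in $\mathbb{C}$ and $\langle A_i:i\in I\rangle$ is an $M$-f.s. sequence with $M\cup\bigcup_{i\in I}A_i=N$. Then for every initial segment $I_0\subseteq I$ (with or without a maximum), $M\cup\bigcup_{i\in I_0}A_i$ is an elementary substructure of $N$.
   Context: Work in a monster model $\mathbb{C}$ of an arbitrary complete theory. For $B\supseteq M$, $\mathrm{tp}(X/B)$ is finitely satisfied in $M$ if each of its formulas is satisfied by a tuple from $M$. An $M$-f.s. sequence is a sequence of sets $\langle A_i:i\in I\rangle$ with $\mathrm{tp}(A_i/A_{<i}M)$ finitely satisfied in $M$ for every $i$, where $A_{<i}=\bigcup_{j<i}A_j$. *)

theory Defs
  imports Main
begin

text \<open>The ambient (monster) structure C has universe
  UNIV :: 'a set, function symbols 'f interpreted by Fi and relation symbols 'r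
  interpreted by Ri (symbols act on argument lists).\<close>

datatype 'f fterm = Var nat | Fn 'f "'f fterm list"

datatype ('f, 'r) fform =
    FEq "'f fterm" "'f fterm"
  | FRel 'r "'f fterm list"
  | FNeg "('f, 'r) fform"
  | FConj "('f, 'r) fform" "('f, 'r) fform"
  | FEx nat "('f, 'r) fform"

fun tvars :: "'f fterm \<Rightarrow> nat set" where
  "tvars (Var x) = {x}"
| "tvars (Fn f ts) = (\<Union>t\<in>set ts. tvars t)"

fun fv :: "('f, 'r) fform \<Rightarrow> nat set" where
  "fv (FEq s t) = tvars s \<union> tvars t"
| "fv (FRel r ts) = (\<Union>t\<in>set ts. tvars t)"
| "fv (FNeg p) = fv p"
| "fv (FConj p q) = fv p \<union> fv q"
| "fv (FEx x p) = fv p - {x}"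

fun teval :: "('f \<Rightarrow> 'a list \<Rightarrow> 'a) \<Rightarrow> (nat \<Rightarrow> 'a) \<Rightarrow> 'f fterm \<Rightarrow> 'a" where
  "teval Fi v (Var x) = v x"
| "teval Fi v (Fn f ts) = Fi f (map (teval Fi v) ts)"

text \<open>Satisfaction in the substructure of C with domain D (quantifiers range over D).\<close>
fun sat :: "('f \<Rightarrow> 'a list \<Rightarrow> 'a) \<Rightarrow> ('r \<Rightarrow> 'a list \<Rightarrow> bool) \<Rightarrow> 'a set
            \<Rightarrow> ('f, 'r) fform \<Rightarrow> (nat \<Rightarrow> 'a) \<Rightarrow> bool" where
  "sat Fi Ri D (FEq s t) v = (teval Fi v s = teval Fi v t)"
| "sat Fi Ri D (FRel r ts) v = Ri r (map (teval Fi v) ts)"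
| "sat Fi Ri D (FNeg p) v = (\<not> sat Fi Ri D p v)"
| "sat Fi Ri D (FConj p q) v = (sat Fi Ri D p v \<and> sat Fi Ri D q v)"
| "sat Fi Ri D (FEx x p) v = (\<exists>d\<in>D. sat Fi Ri D p (v(x := d)))"

definition substr :: "('f \<Rightarrow> 'a list \<Rightarrow> 'a) \<Rightarrow> 'a set \<Rightarrow> bool" where
  "substr Fi D \<longleftrightarrow> D \<noteq> {} \<and> (\<forall>f as. set as \<subseteq> D \<longrightarrow> Fi f as \<in> D)"

definition elem_sub :: "('f \<Rightarrow> 'a list \<Rightarrow> 'a) \<Rightarrow> ('r \<Rightarrow> 'a list \<Rightarrow> bool)
                        \<Rightarrow> 'a set \<Rightarrow> 'a set \<Rightarrow> bool" where
  "elem_sub Fi Ri X Y \<longleftrightarrow> X \<subseteq> Y \<and> substr Fi X \<and> substr Fi Y \<and>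
     (\<forall>(\<phi> :: ('f, 'r) fform) v. v ` fv \<phi> \<subseteq> X \<longrightarrow> (sat Fi Ri X \<phi> v \<longleftrightarrow> sat Fi Ri Y \<phi> v))"

text \<open>tp(X/B) (computed in C) is finitely satisfied in M: every formula
  \<phi>(x,b) with x a finite tuple of variables assigned to elements of X and the
  remaining free variables assigned to elements of B, true in C, is satisfied
  by some tuple from M in place of x.\<close>
definition fin_sat :: "('f \<Rightarrow> 'a list \<Rightarrow> 'a) \<Rightarrow> ('r \<Rightarrow> 'a list \<Rightarrow> bool)
                       \<Rightarrow> 'a set \<Rightarrow> 'a set \<Rightarrow> 'a set \<Rightarrow> bool" where
  "fin_sat Fi Ri X B M \<longleftrightarrow>
     (\<forall>(\<phi> :: ('f, 'r) fform) v S. finite S \<and> v ` S \<subseteq> X \<and> v ` (fv \<phi> - S) \<subseteq> B \<and>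
        sat Fi Ri UNIV \<phi> v \<longrightarrow>
        (\<exists>w. w ` S \<subseteq> M \<and> (\<forall>y. y \<notin> S \<longrightarrow> w y = v y) \<and> sat Fi Ri UNIV \<phi> w))"

definition fs_seq :: "('f \<Rightarrow> 'a list \<Rightarrow> 'a) \<Rightarrow> ('r \<Rightarrow> 'a list \<Rightarrow> bool)
                      \<Rightarrow> 'a set \<Rightarrow> ('i::linorder) set \<Rightarrow> ('i \<Rightarrow> 'a set) \<Rightarrow> bool" where
  "fs_seq Fi Ri M I A \<longleftrightarrow>
     (\<forall>i\<in>I. fin_sat Fi Ri (A i) ((\<Union>j\<in>{j\<in>I. j < i}. A j) \<union> M) M)"

end

theory Submission
  imports Defs
begin

text \<open>By the Tarski-Vaught test it suffices that every formula with parameters in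
  D = M \<union> \<Union>{A i | i \<in> I0} that is satisfiable in C has a solution in D. Since N is
  elementary in C there is a solution c in N. If c lies outside D, it lies in some
  A j with j above the initial segment I0, so the parameters lie in A<j \<union> M;
  since tp(A j / A<j M) is finitely satisfied in M, the formula then has a
  solution in M \<subseteq> D.\<close>

definition tarski_vaught :: "('f \<Rightarrow> 'a list \<Rightarrow> 'a) \<Rightarrow> ('r \<Rightarrow> 'a list \<Rightarrow> bool) \<Rightarrow> 'a set \<Rightarrow> bool"
  where "tarski_vaught Fi Ri D \<longleftrightarrow>
    (\<forall>(p :: ('f, 'r) fform) x v d. v ` (fv p - {x}) \<subseteq> D \<longrightarrow> sat Fi Ri UNIV p (v(x := d)) \<longrightarrow>
       (\<exists>d'\<in>D. sat Fi Ri UNIV p (v(x := d'))))"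

lemma tarski_vaughtD:
  fixes p :: "('f, 'r) fform"
  assumes "tarski_vaught Fi Ri D" and "v ` (fv p - {x}) \<subseteq> D" and "sat Fi Ri UNIV p (v(x := d))"
  obtains d' where "d' \<in> D" and "sat Fi Ri UNIV p (v(x := d'))"
  using assms unfolding tarski_vaught_def by blast

lemma sat_iff_sat_UNIV_if_tarski_vaught:
  assumes "tarski_vaught Fi Ri D" and "v ` fv \<phi> \<subseteq> D"
  shows "sat Fi Ri D \<phi> v \<longleftrightarrow> sat Fi Ri UNIV \<phi> v"
  using assms(2)
proof (induction \<phi> arbitrary: v)
  case (FEx x p)
  have IH: "sat Fi Ri D p (v(x := d)) \<longleftrightarrow> sat Fi Ri UNIV p (v(x := d))" if "d \<in> D" for d
  proof -
    have "(v(x := d)) ` fv p \<subseteq> D" using FEx.prems that by auto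
    then show ?thesis by (rule FEx.IH)
  qed
  show ?case
  proof
    assume "sat Fi Ri D (FEx x p) v"
    then show "sat Fi Ri UNIV (FEx x p) v" using IH by auto
  next
    assume "sat Fi Ri UNIV (FEx x p) v"
    then obtain d where "sat Fi Ri UNIV p (v(x := d))" by auto
    with assms(1) FEx.prems obtain d' where "d' \<in> D" "sat Fi Ri UNIV p (v(x := d'))"
      by (elim tarski_vaughtD) auto
    then show "sat Fi Ri D (FEx x p) v" using IH by auto
  qed
qed auto

lemma substr_if_tarski_vaught:
  fixes Fi :: "'f \<Rightarrow> 'a list \<Rightarrow> 'a" and Ri :: "'r \<Rightarrow> 'a list \<Rightarrow> bool"
  assumes TV: "tarski_vaught Fi Ri D" and "D \<noteq> {}"
  shows "substr Fi D"
  unfolding substr_def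
proof (intro conjI allI impI)
  show "D \<noteq> {}" by fact
next
  fix f as assume as: "set as \<subseteq> D"
  define n where "n = length as"
  define v where "v = (\<lambda>i. if i < n then as ! i else Fi f as)"
  \<comment> \<open>the only solution of x_n = f(x_0, ..., x_(n-1)) is f as\<close>
  define \<phi> :: "('f, 'r) fform" where "\<phi> = FEq (Var n) (Fn f (map Var [0..<n]))"
  have args: "map (teval Fi (v(n := d))) (map Var [0..<n]) = as" for d
    by (rule nth_equalityI) (simp_all add: v_def n_def)
  have "v ` (fv \<phi> - {n}) \<subseteq> D"
    using as by (auto simp: \<phi>_def v_def n_def)
  moreover have "sat Fi Ri UNIV \<phi> (v(n := Fi f as))"
    by (simp add: \<phi>_def args del: map_map)
  ultimately obtain d where "d \<in> D" "sat Fi Ri UNIV \<phi> (v(n := d))"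
    using TV by (elim tarski_vaughtD)
  then show "Fi f as \<in> D"
    by (simp add: \<phi>_def args del: map_map)
qed

lemma tarski_vaught_if_elem_sub_UNIV:
  fixes Fi :: "'f \<Rightarrow> 'a list \<Rightarrow> 'a" and Ri :: "'r \<Rightarrow> 'a list \<Rightarrow> bool"
  assumes "elem_sub Fi Ri N UNIV"
  shows "tarski_vaught Fi Ri N"
  unfolding tarski_vaught_def
proof (intro allI impI)
  fix p :: "('f, 'r) fform" and x v d
  assume "v ` (fv p - {x}) \<subseteq> N" and "sat Fi Ri UNIV p (v(x := d))"
  then have "sat Fi Ri UNIV (FEx x p) v" by auto
  then have "sat Fi Ri N (FEx x p) v"
    using assms \<open>v ` (fv p - {x}) \<subseteq> N\<close> unfolding elem_sub_def by (metis fv.simps(5))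
  then obtain c where "c \<in> N" "sat Fi Ri N p (v(x := c))" by auto
  moreover have "(v(x := c)) ` fv p \<subseteq> N"
    using \<open>v ` (fv p - {x}) \<subseteq> N\<close> \<open>c \<in> N\<close> by auto
  ultimately show "\<exists>c\<in>N. sat Fi Ri UNIV p (v(x := c))"
    using assms unfolding elem_sub_def by blast
qed

lemma elem_sub_UNIV_if_tarski_vaught:
  fixes Fi :: "'f \<Rightarrow> 'a list \<Rightarrow> 'a" and Ri :: "'r \<Rightarrow> 'a list \<Rightarrow> bool"
  assumes "tarski_vaught Fi Ri D" and "D \<noteq> {}" and "substr Fi (UNIV :: 'a set)"
  shows "elem_sub Fi Ri D (UNIV :: 'a set)"
  unfolding elem_sub_def
proof (intro conjI allI impI)
  show "substr Fi D" using assms(1,2) by (rule substr_if_tarski_vaught)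
  fix \<phi> :: "('f, 'r) fform" and v assume "v ` fv \<phi> \<subseteq> D"
  with assms(1) show "sat Fi Ri D \<phi> v \<longleftrightarrow> sat Fi Ri UNIV \<phi> v"
    by (rule sat_iff_sat_UNIV_if_tarski_vaught)
qed (use assms(3) in auto)

lemma elem_sub_if_elem_sub_UNIV:
  fixes Fi :: "'f \<Rightarrow> 'a list \<Rightarrow> 'a" and Ri :: "'r \<Rightarrow> 'a list \<Rightarrow> bool"
  assumes X: "elem_sub Fi Ri X UNIV" and Y: "elem_sub Fi Ri Y UNIV" and "X \<subseteq> Y"
  shows "elem_sub Fi Ri X Y"
  unfolding elem_sub_def
proof (intro conjI allI impI)
  fix \<phi> :: "('f, 'r) fform" and v assume vX: "v ` fv \<phi> \<subseteq> X"
  then have "sat Fi Ri X \<phi> v \<longleftrightarrow> sat Fi Ri UNIV \<phi> v"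
    using X by (simp add: elem_sub_def)
  moreover have "sat Fi Ri Y \<phi> v \<longleftrightarrow> sat Fi Ri UNIV \<phi> v"
    using vX \<open>X \<subseteq> Y\<close> Y by (simp add: elem_sub_def subset_trans)
  ultimately show "sat Fi Ri X \<phi> v \<longleftrightarrow> sat Fi Ri Y \<phi> v" by simp
qed (use assms in \<open>auto simp: elem_sub_def\<close>)

lemma fin_sat_single_witness:
  fixes p :: "('f, 'r) fform"
  assumes "fin_sat Fi Ri X B M" and "c \<in> X" and "v ` (fv p - {x}) \<subseteq> B"
    and "sat Fi Ri UNIV p (v(x := c))"
  obtains m where "m \<in> M" and "sat Fi Ri UNIV p (v(x := m))"
proof -
  have "(v(x := c)) ` {x} \<subseteq> X" and "(v(x := c)) ` (fv p - {x}) \<subseteq> B"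
    using assms(2,3) by auto
  with assms(1,4) have "\<exists>w. w ` {x} \<subseteq> M \<and> (\<forall>y. y \<notin> {x} \<longrightarrow> w y = (v(x := c)) y) \<and>
      sat Fi Ri UNIV p w"
    unfolding fin_sat_def by (elim allE[of _ p] allE[of _ "v(x := c)"] allE[of _ "{x}"]) simp
  then obtain w where "w x \<in> M" and "\<forall>y. y \<noteq> x \<longrightarrow> w y = v y" and "sat Fi Ri UNIV p w"
    by auto
  moreover from \<open>\<forall>y. y \<noteq> x \<longrightarrow> w y = v y\<close> have "w = v(x := w x)" by auto
  ultimately show thesis using that by metis
qed

lemma tarski_vaught_initial_segment:
  fixes Fi :: "'f \<Rightarrow> 'a list \<Rightarrow> 'a" and Ri :: "'r \<Rightarrow> 'a list \<Rightarrow> bool"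
    and I :: "('i::linorder) set"
  assumes N: "elem_sub Fi Ri N UNIV" and fs: "fs_seq Fi Ri M I A"
    and union: "M \<union> (\<Union>i\<in>I. A i) = N"
    and I0: "I0 \<subseteq> I" "\<forall>i\<in>I0. \<forall>j\<in>I. j < i \<longrightarrow> j \<in> I0"
  shows "tarski_vaught Fi Ri (M \<union> (\<Union>i\<in>I0. A i))" (is "tarski_vaught Fi Ri ?D")
  unfolding tarski_vaught_def
proof (intro allI impI)
  fix p :: "('f, 'r) fform" and x v d
  assume vD: "v ` (fv p - {x}) \<subseteq> ?D" and "sat Fi Ri UNIV p (v(x := d))"
  moreover have "?D \<subseteq> N" using union I0 by auto
  ultimately have "v ` (fv p - {x}) \<subseteq> N" and "sat Fi Ri UNIV p (v(x := d))" by auto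
  then obtain c where "c \<in> N" and sc: "sat Fi Ri UNIV p (v(x := c))"
    using tarski_vaught_if_elem_sub_UNIV[OF N] by (elim tarski_vaughtD)
  show "\<exists>d'\<in>?D. sat Fi Ri UNIV p (v(x := d'))"
  proof (cases "c \<in> ?D")
    case True
    with sc show ?thesis by blast
  next
    case False
    with \<open>c \<in> N\<close> union obtain j where j: "j \<in> I" "c \<in> A j" "j \<notin> I0" by auto
    with I0 have "i < j" if "i \<in> I0" for i
      using that by (metis linorder_neqE)
    with I0 have "?D \<subseteq> (\<Union>k\<in>{k\<in>I. k < j}. A k) \<union> M" by blast
    with vD have "v ` (fv p - {x}) \<subseteq> (\<Union>k\<in>{k\<in>I. k < j}. A k) \<union> M" by blast
    moreover have "fin_sat Fi Ri (A j) ((\<Union>k\<in>{k\<in>I. k < j}. A k) \<union> M) M"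
      using fs j(1) unfolding fs_seq_def by blast
    ultimately obtain m where "m \<in> M" "sat Fi Ri UNIV p (v(x := m))"
      using j(2) sc by (elim fin_sat_single_witness)
    then show ?thesis by blast
  qed
qed

theorem lemma2:
  fixes Fi :: "'f \<Rightarrow> 'a list \<Rightarrow> 'a" and Ri :: "'r \<Rightarrow> 'a list \<Rightarrow> bool"
    and M N :: "'a set" and I :: "('i::linorder) set" and A :: "'i \<Rightarrow> 'a set"
  assumes "elem_sub Fi Ri M (UNIV :: 'a set)"
    and "elem_sub Fi Ri N (UNIV :: 'a set)"
    and "elem_sub Fi Ri M N"
    and "fs_seq Fi Ri M I A"
    and "M \<union> (\<Union>i\<in>I. A i) = N"
  shows "\<forall>I0. I0 \<subseteq> I \<and> (\<forall>i\<in>I0. \<forall>j\<in>I. j < i \<longrightarrow> j \<in> I0) \<longrightarrow>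
           elem_sub Fi Ri (M \<union> (\<Union>i\<in>I0. A i)) N"
proof (intro allI impI)
  fix I0 assume I0: "I0 \<subseteq> I \<and> (\<forall>i\<in>I0. \<forall>j\<in>I. j < i \<longrightarrow> j \<in> I0)"
  let ?D = "M \<union> (\<Union>i\<in>I0. A i)"
  \<comment> \<open>of M only its nonemptiness is needed\<close>
  have "M \<noteq> {}" and "substr Fi (UNIV :: 'a set)"
    using assms(1) unfolding elem_sub_def substr_def by auto
  then have "elem_sub Fi Ri ?D UNIV"
    using tarski_vaught_initial_segment[OF assms(2,4,5)] I0
    by (intro elem_sub_UNIV_if_tarski_vaught) auto
  moreover have "?D \<subseteq> N" using I0 assms(5) by auto
  ultimately show "elem_sub Fi Ri ?D N"
    using assms(2) by (elim elem_sub_if_elem_sub_UNIV[rotated])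
qed

end
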